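(* Let $\gamma > 1.755$ and let $I$ be a $\gamma$-stable instance of the metric Steiner tree problem with optimal Steiner tree $\mathrm{OPT}$, such that no two Steiner points are adjacent in $\mathrm{OPT}$. Let $H$ be a subgraph of $\mathrm{OPT}$. Suppose $T(a, \bar b)$, with $\bar b = (b_1, \ldots, b_m)$, is a terminal component fan relative to $H$ such that: (i) the average weight of $T(a, \bar b)$ is less than the weight of every edge not in $H$ that connects two distinct terminal components of $H$; (ii) the average weight of $T(a, \bar b)$ is minimal among the average weights of all terminal component fans relative to $H$; (iii) the edges of $T(a, \bar b)$ are all within a factor of $\frac{1}{\gamma - 1}$ of each other, i.e. $w_{ab_i} \le \frac{1}{\gamma - 1} w_{ab_j}$ for all $i, j$. Then $T(a, \bar b)$ is a subgraph of $\mathrm{OPT}$, i.e. $ab_i$ is an edge of $\mathrm{OPT}$ for every $i$.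
   Context: An instance of the metric Steiner tree problem consists of a finite set $V$ of points of a metric space with metric $d$, a set $T \subseteq V$ of terminals, and the complete graph on $V$ with edge weights $w_{uv} = d(u,v)$. Points of $V \setminus T$ are Steiner points. A Steiner tree is a tree in this complete graph whose vertex set contains all of $T$; its weight is the sum of its edge weights. For $\gamma > 1$, the instance is $\gamma$-stable if it has a minimum-weight Steiner tree $\mathrm{OPT}$ such that for every $w' : V \times V \to \mathbb{R}_{\ge 0}$ with $w_{uv} \le w'_{uv} \le \gamma w_{uv}$ for all $u,v$, every minimum-weight Steiner tree with respect to $w'$ equals $\mathrm{OPT}$. For vertices $a$ and $\bar b = (b_1, \ldots, b_m)$ with $m \ge 2$, $T(a, \bar b)$ denotes the star on vertex set $\{a, b_1, \ldots, b_m\}$ with edges $ab_1, \ldots, ab_m$; its average weight is $\frac{\sum_{i=1}^m w_{ab_i}}{m - 1}$. For a subgraph $H$ of $\mathrm{OPT}$, the terminal components of $H$ are the connected components of $H$ together with the terminals not in $V(H)$ (each as a singleton). $T(a, \bar b)$ is a terminal component fan relative to $H$ if $a$ is a Steiner point and each $b_i$ is either a terminal or a vertex of a connected component of $H$ having at least two vertices, with the $b_i$ lying in pairwise distinct terminal components of $H$. *)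

theory Defs
  imports "HOL-Analysis.Analysis"
begin

text \<open>Graphs in the complete graph on a point set: a graph is a pair (S, E) of a vertex set
  and a set of edges, each edge being a two-element set {u, v} with u \<noteq> v.\<close>

definition adj :: "'a set set \<Rightarrow> 'a \<Rightarrow> 'a \<Rightarrow> bool" where
  "adj E x y \<longleftrightarrow> x \<noteq> y \<and> {x, y} \<in> E"

definition is_tree :: "'a set \<Rightarrow> 'a set set \<Rightarrow> bool" where
  "is_tree S E \<longleftrightarrow> finite S \<and> S \<noteq> {} \<and>
     (\<forall>e\<in>E. \<exists>u v. e = {u, v} \<and> u \<noteq> v \<and> u \<in> S \<and> v \<in> S) \<and>
     (\<forall>u\<in>S. \<forall>v\<in>S. (adj E)\<^sup>*\<^sup>* u v) \<and>
     card E + 1 = card S"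

definition steiner_tree :: "'a set \<Rightarrow> 'a set \<Rightarrow> 'a set \<times> 'a set set \<Rightarrow> bool" where
  "steiner_tree V T X \<longleftrightarrow> T \<subseteq> fst X \<and> fst X \<subseteq> V \<and> is_tree (fst X) (snd X)"

definition edist :: "'a::metric_space set \<Rightarrow> real" where
  "edist e = (THE r. \<exists>u v. e = {u, v} \<and> r = dist u v)"

definition min_steiner :: "'a set \<Rightarrow> 'a set \<Rightarrow> ('a set \<Rightarrow> real) \<Rightarrow> 'a set \<times> 'a set set \<Rightarrow> bool" where
  "min_steiner V T w X \<longleftrightarrow> steiner_tree V T X \<and>
     (\<forall>Y. steiner_tree V T Y \<longrightarrow> sum w (snd X) \<le> sum w (snd Y))"

definition perturbation :: "real \<Rightarrow> 'a::metric_space set \<Rightarrow> ('a set \<Rightarrow> real) \<Rightarrow> bool" where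
  "perturbation \<gamma> V w' \<longleftrightarrow>
     (\<forall>u\<in>V. \<forall>v\<in>V. u \<noteq> v \<longrightarrow> dist u v \<le> w' {u, v} \<and> w' {u, v} \<le> \<gamma> * dist u v)"

definition stable_with_opt :: "real \<Rightarrow> 'a::metric_space set \<Rightarrow> 'a set \<Rightarrow> 'a set \<times> 'a set set \<Rightarrow> bool" where
  "stable_with_opt \<gamma> V T OPT \<longleftrightarrow> min_steiner V T edist OPT \<and>
     (\<forall>w'. perturbation \<gamma> V w' \<longrightarrow> (\<forall>X. min_steiner V T w' X \<longrightarrow> X = OPT))"

definition subgraph :: "'a set \<Rightarrow> 'a set set \<Rightarrow> 'a set \<times> 'a set set \<Rightarrow> bool" where
  "subgraph VH EH G \<longleftrightarrow> VH \<subseteq> fst G \<and> EH \<subseteq> snd G \<and> (\<forall>e\<in>EH. e \<subseteq> VH)"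

definition comp :: "'a set \<Rightarrow> 'a set set \<Rightarrow> 'a \<Rightarrow> 'a set" where
  "comp VH EH x = {y \<in> VH. (adj EH)\<^sup>*\<^sup>* x y}"

text \<open>Terminal component of H containing x (meaningful for x \<in> VH \<union> T).\<close>
definition tcomp :: "'a set \<Rightarrow> 'a set \<Rightarrow> 'a set set \<Rightarrow> 'a \<Rightarrow> 'a set" where
  "tcomp T VH EH x = (if x \<in> VH then comp VH EH x else {x})"

definition avg_weight :: "'a::metric_space \<Rightarrow> 'a list \<Rightarrow> real" where
  "avg_weight a b = (\<Sum>i<length b. dist a (b ! i)) / (real (length b) - 1)"

definition tc_fan :: "'a set \<Rightarrow> 'a set \<Rightarrow> 'a set \<Rightarrow> 'a set set \<Rightarrow> 'a \<Rightarrow> 'a list \<Rightarrow> bool" where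
  "tc_fan V T VH EH a b \<longleftrightarrow>
     a \<in> V - T \<and> length b \<ge> 2 \<and> set b \<subseteq> V \<and> a \<notin> set b \<and>
     (\<forall>i<length b. b ! i \<in> T \<or> (b ! i \<in> VH \<and> card (comp VH EH (b ! i)) \<ge> 2)) \<and>
     (\<forall>i<length b. \<forall>j<length b. i \<noteq> j \<longrightarrow> tcomp T VH EH (b ! i) \<noteq> tcomp T VH EH (b ! j))"

end

theory Submission
  imports Defs "HOL-Library.Transitive_Closure_Table"
begin

text \<open>
  Stability is used through one exchange inequality: if a connected graph \<open>G\<close> on a vertex
  set containing \<open>T\<close> misses an edge of OPT, then \<open>w(G - OPT) > \<gamma> w(OPT - G)\<close>, since otherwise
  scaling all weights outside \<open>G\<close> by \<open>\<gamma>\<close> would make a spanning tree of \<open>G\<close> optimal.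

  Let \<open>A\<close> be the average weight of the fan. An edge \<open>e\<close> of OPT outside \<open>H\<close> either joins two
  terminal components, so \<open>w(e) > A\<close> by (i), or has a Steiner endpoint \<open>s\<close> outside \<open>H\<close>. In the
  latter case the neighbours of \<open>s\<close> are terminals in distinct terminal components, hence form a
  fan of average weight at least \<open>A\<close> by (ii), while rehanging the star of \<open>s\<close> at the far end of
  \<open>e\<close> must be more expensive than \<open>\<gamma>\<close> times the star; this gives \<open>w(e) > (\<gamma> - 1) A\<close>. Since
  \<open>\<gamma> (\<gamma> - 1)\<^sup>2 \<ge> 1\<close>, both bounds yield \<open>A \<le> \<gamma> w(e)\<close> and \<open>A / (\<gamma> - 1) \<le> \<gamma> w(e)\<close>.

  If the centre \<open>a\<close> lies on OPT and \<open>a b\<^sub>j\<close> is missing, exchanging \<open>a b\<^sub>j\<close> for a suitable edge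
  of the tree path from \<open>a\<close> to \<open>b\<^sub>j\<close> violates the exchange inequality, because
  \<open>w(a b\<^sub>j) \<le> A / (\<gamma> - 1)\<close> by (iii). If \<open>a\<close> is not on OPT, the fan edges, of total weight
  \<open>(m - 1) A\<close>, can be attached one at a time, each time deleting an edge of OPT outside \<open>H\<close>,
  which weighs at least \<open>A / \<gamma>\<close>; again the exchange inequality fails.
\<close>

definition edges_in :: "'a set \<Rightarrow> 'a set set \<Rightarrow> bool" where
  "edges_in S E \<longleftrightarrow> (\<forall>e\<in>E. \<exists>u v. e = {u, v} \<and> u \<noteq> v \<and> u \<in> S \<and> v \<in> S)"

definition connected_on :: "'a set \<Rightarrow> 'a set set \<Rightarrow> bool" where
  "connected_on S E \<longleftrightarrow> (\<forall>u\<in>S. \<forall>v\<in>S. (adj E)\<^sup>*\<^sup>* u v)"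

lemma is_tree_iff:
  "is_tree S E \<longleftrightarrow> finite S \<and> S \<noteq> {} \<and> edges_in S E \<and> connected_on S E \<and> card E + 1 = card S"
  unfolding is_tree_def edges_in_def connected_on_def by blast

lemma symp_adj: "symp (adj E)"
  unfolding adj_def symp_def by (auto simp: insert_commute)

lemma reach_sym: "(adj E)\<^sup>*\<^sup>* x y \<Longrightarrow> (adj E)\<^sup>*\<^sup>* y x"
  by (rule sympD[OF symp_rtranclp[OF symp_adj]])

lemma reach_mono: "E \<subseteq> E' \<Longrightarrow> (adj E)\<^sup>*\<^sup>* x y \<Longrightarrow> (adj E')\<^sup>*\<^sup>* x y"
  by (rule rtranclp_mono[THEN predicate2D]) (auto simp: adj_def)

lemma edges_in_mem: "edges_in S E \<Longrightarrow> {x, y} \<in> E \<Longrightarrow> x \<noteq> y \<and> x \<in> S \<and> y \<in> S"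
  unfolding edges_in_def by (metis doubleton_eq_iff)

lemma edges_in_adj: "edges_in S E \<Longrightarrow> adj E x y \<Longrightarrow> x \<in> S \<and> y \<in> S"
  unfolding adj_def using edges_in_mem by metis

lemma edges_in_subset: "E' \<subseteq> E \<Longrightarrow> edges_in S E \<Longrightarrow> edges_in S E'"
  unfolding edges_in_def by (simp add: subset_eq)

lemma edges_in_insert:
  "edges_in S E \<Longrightarrow> S \<subseteq> S' \<Longrightarrow> u \<noteq> v \<Longrightarrow> u \<in> S' \<Longrightarrow> v \<in> S' \<Longrightarrow> edges_in S' (insert {u, v} E)"
  unfolding edges_in_def by fastforce

lemma edges_in_finite: "finite S \<Longrightarrow> edges_in S E \<Longrightarrow> finite E"
  by (rule finite_subset[of E "Pow S"]) (auto simp: edges_in_def)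

lemma connected_onI:
  assumes "\<And>w. w \<in> S \<Longrightarrow> (adj E)\<^sup>*\<^sup>* x w"
  shows "connected_on S E"
  unfolding connected_on_def
proof (intro ballI)
  fix u v assume "u \<in> S" "v \<in> S"
  then show "(adj E)\<^sup>*\<^sup>* u v" using assms reach_sym rtranclp_trans by metis
qed

lemma crossing_edge:
  assumes "(adj E)\<^sup>*\<^sup>* x y" "x \<in> R" "y \<notin> R"
  shows "\<exists>u v. adj E u v \<and> u \<in> R \<and> v \<notin> R"
  using assms by (induction rule: rtranclp_induct) auto

lemma is_tree_insert_leaf:
  assumes tree: "is_tree R F" and u: "u \<in> R" and v: "v \<notin> R"
  shows "is_tree (insert v R) (insert {u, v} F)"
proof -
  have R: "finite R" "edges_in R F" "connected_on R F" "card F + 1 = card R"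
    using tree unfolding is_tree_iff by auto
  have "{u, v} \<notin> F" using edges_in_mem[OF R(2), of u v] v by blast
  then have card: "card (insert {u, v} F) + 1 = card (insert v R)"
    using R v edges_in_finite[OF R(1,2)] by simp
  have "u \<noteq> v" using u v by blast
  then have "edges_in (insert v R) (insert {u, v} F)"
    using edges_in_insert[OF R(2) subset_insertI] u by simp
  moreover have "connected_on (insert v R) (insert {u, v} F)"
  proof (rule connected_onI)
    fix w assume "w \<in> insert v R"
    moreover have "(adj (insert {u, v} F))\<^sup>*\<^sup>* u w" if "w \<in> R"
      using R(3) u that reach_mono[of F "insert {u, v} F"] unfolding connected_on_def by blast
    moreover have "adj (insert {u, v} F) u v" using u v unfolding adj_def by auto
    ultimately show "(adj (insert {u, v} F))\<^sup>*\<^sup>* u w" by auto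
  qed
  ultimately show ?thesis using R card unfolding is_tree_iff by auto
qed

lemma exists_spanning_tree:
  assumes fin: "finite S" and ne: "S \<noteq> {}" and edges: "edges_in S E" and con: "connected_on S E"
  shows "\<exists>F\<subseteq>E. is_tree S F"
proof -
  have grow: "\<exists>R F. R \<subseteq> S \<and> card R = k \<and> F \<subseteq> E \<and> is_tree R F"
    if "1 \<le> k" "k \<le> card S" for k
    using that
  proof (induction k)
    case (Suc k)
    show ?case
    proof (cases "k = 0")
      case True
      obtain x where "x \<in> S" using ne by blast
      then show ?thesis
        using True by (intro exI[of _ "{x}"] exI[of _ "{}"]) (auto simp: is_tree_def)
    next
      case False
      then obtain R F where RF: "R \<subseteq> S" "card R = k" "F \<subseteq> E" "is_tree R F"
        using Suc by auto
      then obtain x where x: "x \<in> R" unfolding is_tree_def by blast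
      have "R \<noteq> S" using RF(2) Suc.prems(2) by auto
      then obtain y where y: "y \<in> S" "y \<notin> R" using RF(1) by blast
      have "(adj E)\<^sup>*\<^sup>* x y" using con x y RF(1) unfolding connected_on_def by blast
      then obtain u v where uv: "adj E u v" "u \<in> R" "v \<notin> R" using crossing_edge x y by metis
      have "v \<in> S" "{u, v} \<in> E" using edges_in_adj[OF edges uv(1)] uv(1) unfolding adj_def by auto
      moreover have "card (insert v R) = Suc k"
        using RF(1,2) uv(3) finite_subset[OF RF(1) fin] by simp
      ultimately show ?thesis using RF is_tree_insert_leaf[OF RF(4) uv(2,3)]
        by (intro exI[of _ "insert v R"] exI[of _ "insert {u, v} F"]) auto
    qed
  qed simp
  obtain R F where "R \<subseteq> S" "card R = card S" "F \<subseteq> E" "is_tree R F"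
    using grow[of "card S"] fin ne by (auto simp: Suc_le_eq card_gt_0_iff)
  then show ?thesis using fin by (metis card_subset_eq)
qed

lemma connected_card_le:
  assumes "finite S" "S \<noteq> {}" "edges_in S E" "connected_on S E"
  shows "card S \<le> card E + 1"
proof -
  obtain F where "F \<subseteq> E" "is_tree S F" using exists_spanning_tree[OF assms] by blast
  moreover have "finite E" using edges_in_finite assms by blast
  ultimately show ?thesis using card_mono unfolding is_tree_def by fastforce
qed

lemma reach_remove_edge:
  assumes "(adj E)\<^sup>*\<^sup>* z w"
  shows "(adj (E - {{c, d}}))\<^sup>*\<^sup>* z w \<or> (adj (E - {{c, d}}))\<^sup>*\<^sup>* c w \<or> (adj (E - {{c, d}}))\<^sup>*\<^sup>* d w"
  using assms
proof (induction rule: rtranclp_induct)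
  case (step y x)
  show ?case
  proof (cases "{y, x} = {c, d}")
    case True
    then show ?thesis by (metis doubleton_eq_iff rtranclp.rtrancl_refl)
  next
    case False
    then have "adj (E - {{c, d}}) y x" using step(2) unfolding adj_def by blast
    then show ?thesis using step(3) by (meson rtranclp.rtrancl_into_rtrancl)
  qed
qed simp

lemma tree_remove_edge_disconnects:
  assumes tree: "is_tree S E" and e: "{x, y} \<in> E"
  shows "\<not> (adj (E - {{x, y}}))\<^sup>*\<^sup>* x y"
proof
  assume xy: "(adj (E - {{x, y}}))\<^sup>*\<^sup>* x y"
  have S: "finite S" "S \<noteq> {}" "edges_in S E" "connected_on S E" "card E + 1 = card S"
    using tree unfolding is_tree_iff by auto
  have x: "x \<in> S" using edges_in_mem[OF S(3) e] by blast
  have "connected_on S (E - {{x, y}})"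
  proof (rule connected_onI)
    fix w assume "w \<in> S"
    then have "(adj E)\<^sup>*\<^sup>* x w" using S(4) x unfolding connected_on_def by blast
    then show "(adj (E - {{x, y}}))\<^sup>*\<^sup>* x w"
      using reach_remove_edge[of E x w x y] xy by (meson rtranclp_trans)
  qed
  moreover have "edges_in S (E - {{x, y}})" using edges_in_subset S(3) by blast
  ultimately have "card S \<le> card (E - {{x, y}}) + 1" using connected_card_le S(1,2) by blast
  moreover have "card E > 0" using edges_in_finite[OF S(1,3)] e card_gt_0_iff by blast
  ultimately show False using S(5) e by simp
qed

lemma connected_on_exchange:
  assumes con: "connected_on S G" and S: "x \<in> S" "u \<in> S" "v \<in> S"
    and ux: "(adj (G - {{x, y}}))\<^sup>*\<^sup>* u x" and yv: "(adj (G - {{x, y}}))\<^sup>*\<^sup>* y v"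
  shows "connected_on S (G - {{x, y}} \<union> {{u, v}})"
proof (rule connected_onI)
  define G' where "G' = G - {{x, y}} \<union> {{u, v}}"
  have mono: "(adj (G - {{x, y}}))\<^sup>*\<^sup>* p q \<Longrightarrow> (adj G')\<^sup>*\<^sup>* p q" for p q
    by (rule reach_mono[of "G - {{x, y}}"]) (auto simp: G'_def)
  have uv: "(adj G')\<^sup>*\<^sup>* u v"
    by (cases "u = v") (auto simp: G'_def adj_def)
  fix w assume "w \<in> S"
  then have "(adj G)\<^sup>*\<^sup>* x w" using con S unfolding connected_on_def by blast
  then consider "(adj (G - {{x, y}}))\<^sup>*\<^sup>* x w" | "(adj (G - {{x, y}}))\<^sup>*\<^sup>* y w"
    using reach_remove_edge[of G x w x y] by blast
  then show "(adj G')\<^sup>*\<^sup>* u w"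
  proof cases
    case 1
    from mono[OF ux] mono[OF 1] show ?thesis by (rule rtranclp_trans)
  next
    case 2
    then have "(adj G')\<^sup>*\<^sup>* v w" using mono[OF yv] mono[OF 2] reach_sym rtranclp_trans by metis
    with uv show ?thesis by (rule rtranclp_trans)
  qed
qed

lemma rtrancl_path_avoid_vertex:
  assumes "rtrancl_path (adj G) u zs w" "y \<in> e" "y \<notin> set (u # zs)"
  shows "(adj (G - {e}))\<^sup>*\<^sup>* u w"
  using assms
proof (induction rule: rtrancl_path.induct)
  case (step x z zs w)
  then have "adj (G - {e}) x z" unfolding adj_def by auto
  then show ?case using step by (simp add: converse_rtranclp_into_rtranclp)
qed simp

lemma rtranclp_simple_path:
  assumes "r\<^sup>*\<^sup>* u v"
  obtains zs where "rtrancl_path r u zs v" "distinct (u # zs)"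
proof -
  obtain zs where "rtrancl_path r u zs v" using assms rtranclp_eq_rtrancl_path by metis
  then show ?thesis by (rule rtrancl_path_distinct) (rule that)
qed

lemma reach_first_edge:
  assumes "(adj G)\<^sup>*\<^sup>* u v" "u \<noteq> v"
  shows "\<exists>t. adj G u t \<and> (adj (G - {{u, t}}))\<^sup>*\<^sup>* t v"
proof -
  obtain zs where "rtrancl_path (adj G) u zs v" "distinct (u # zs)"
    using rtranclp_simple_path[OF assms(1)] .
  then obtain t ts where "adj G u t" "rtrancl_path (adj G) t ts v" "u \<notin> set (t # ts)"
    using assms(2) by (cases rule: rtrancl_path.cases) auto
  then show ?thesis using rtrancl_path_avoid_vertex[of G t ts v u "{u, t}"] by blast
qed

lemma simple_path_exit_edge:
  assumes "rtrancl_path (adj G) u zs v" "distinct (u # zs)" "\<not> (adj H)\<^sup>*\<^sup>* u v"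
  shows "\<exists>x y. adj G x y \<and> {x, y} \<notin> H \<and>
    (adj (G - {{x, y}}))\<^sup>*\<^sup>* u x \<and> (adj (G - {{x, y}}))\<^sup>*\<^sup>* y v"
  using assms
proof (induction rule: rtrancl_path.induct)
  case (step u t ts v)
  show ?case
  proof (cases "{u, t} \<in> H")
    case False
    then show ?thesis
      using step rtrancl_path_avoid_vertex[of G t ts v u "{u, t}"] by auto
  next
    case True
    then have "adj H u t" using step(1) unfolding adj_def by simp
    then have "\<not> (adj H)\<^sup>*\<^sup>* t v" using step(5) by (meson converse_rtranclp_into_rtranclp)
    then obtain x y where xy: "adj G x y" "{x, y} \<notin> H"
      "(adj (G - {{x, y}}))\<^sup>*\<^sup>* t x" "(adj (G - {{x, y}}))\<^sup>*\<^sup>* y v"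
      using step by auto
    have "adj (G - {{x, y}}) u t" using step(1) True xy(2) unfolding adj_def by auto
    then show ?thesis using xy by (meson converse_rtranclp_into_rtranclp)
  qed
qed simp

lemma reach_exit_edge:
  assumes "(adj G)\<^sup>*\<^sup>* u v" "\<not> (adj H)\<^sup>*\<^sup>* u v"
  shows "\<exists>x y. adj G x y \<and> {x, y} \<notin> H \<and>
    (adj (G - {{x, y}}))\<^sup>*\<^sup>* u x \<and> (adj (G - {{x, y}}))\<^sup>*\<^sup>* y v"
proof -
  obtain zs where "rtrancl_path (adj G) u zs v" "distinct (u # zs)"
    using rtranclp_simple_path[OF assms(1)] .
  from simple_path_exit_edge[OF this assms(2)] show ?thesis .
qed

lemma reach_from_hub:
  assumes "\<forall>e\<in>H. c \<notin> e" "(adj (H \<union> (\<lambda>z. {c, z}) ` Z))\<^sup>*\<^sup>* c w"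
  shows "w = c \<or> (\<exists>z\<in>Z. (adj H)\<^sup>*\<^sup>* z w)"
  using assms(2)
proof (induction rule: rtranclp_induct)
  case (step y w)
  show ?case
  proof (cases "{y, w} \<in> H")
    case True
    then have "y \<noteq> c" "adj H y w" using assms(1) step(2) unfolding adj_def by auto
    then show ?thesis using step(3) rtranclp.rtrancl_into_rtrancl by metis
  next
    case False
    then obtain z where "z \<in> Z" "{y, w} = {c, z}" using step(2) unfolding adj_def by auto
    then show ?thesis by (metis doubleton_eq_iff rtranclp.rtrancl_refl)
  qed
qed simp

definition bypass :: "'a set set \<Rightarrow> 'a \<Rightarrow> 'a \<Rightarrow> 'a set set" where
  "bypass G s t = {e \<in> G. s \<notin> e} \<union> (\<lambda>z. {t, z}) ` ({z. adj G s z} - {t})"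

lemma edges_in_bypass:
  assumes edges: "edges_in S G" and st: "adj G s t"
  shows "edges_in (S - {s}) (bypass G s t)"
  unfolding edges_in_def
proof
  fix e assume "e \<in> bypass G s t"
  then consider (old) "e \<in> G" "s \<notin> e" | (new) z where "adj G s z" "z \<noteq> t" "e = {t, z}"
    unfolding bypass_def by blast
  then show "\<exists>u v. e = {u, v} \<and> u \<noteq> v \<and> u \<in> S - {s} \<and> v \<in> S - {s}"
  proof cases
    case old
    then obtain u v where "e = {u, v}" "u \<noteq> v" "u \<in> S" "v \<in> S"
      using edges unfolding edges_in_def by blast
    then show ?thesis using old(2) by blast
  next
    case new
    moreover have "t \<in> S" "z \<in> S" "s \<noteq> t" "s \<noteq> z"
      using edges_in_adj[OF edges] st new(1) unfolding adj_def by auto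
    ultimately show ?thesis by blast
  qed
qed

lemma connected_on_bypass:
  assumes con: "connected_on S G" and edges: "edges_in S G" and st: "adj G s t"
  shows "connected_on (S - {s}) (bypass G s t)"
proof (rule connected_onI)
  let ?G' = "bypass G s t"
  have from_t: "w = s \<or> (adj ?G')\<^sup>*\<^sup>* t w" if "(adj G)\<^sup>*\<^sup>* t w" for w
    using that
  proof (induction rule: rtranclp_induct)
    case (step y w)
    show ?case
    proof (cases "w = s \<or> y = s")
      case True
      then consider "w = s" | "y = s" "w \<noteq> s" by blast
      then show ?thesis
      proof cases
        case 2
        then have "w = t \<or> adj ?G' t w" using step(2) unfolding adj_def bypass_def by auto
        then show ?thesis by auto
      qed simp
    next
      case False
      then have "adj ?G' y w" using step(2) unfolding adj_def bypass_def by auto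
      then show ?thesis using step(3) False by (meson rtranclp.rtrancl_into_rtrancl)
    qed
  qed simp
  fix w assume "w \<in> S - {s}"
  moreover have "t \<in> S" using edges_in_adj[OF edges st] by blast
  ultimately show "(adj ?G')\<^sup>*\<^sup>* t w" using from_t con unfolding connected_on_def by blast
qed

lemma edist_eq: "edist {u, v} = dist u v"
  unfolding edist_def by (rule the_equality) (auto simp: doubleton_eq_iff dist_commute)

lemma edist_nonneg: "edges_in S E \<Longrightarrow> e \<in> E \<Longrightarrow> 0 \<le> edist e"
  unfolding edges_in_def by (metis edist_eq zero_le_dist)

lemma finite_steiner_trees:
  assumes "finite V"
  shows "finite {X. steiner_tree V T X}"
proof (rule finite_subset)
  show "{X. steiner_tree V T X} \<subseteq> Pow V \<times> Pow (Pow V)"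
  proof safe
    fix S E assume st: "steiner_tree V T (S, E)"
    then show "x \<in> V" if "x \<in> S" for x using that unfolding steiner_tree_def by auto
    fix e x assume "e \<in> E" "x \<in> e"
    then show "x \<in> V" using st unfolding steiner_tree_def is_tree_def by auto
  qed
  show "finite (Pow V \<times> Pow (Pow V))" using assms by simp
qed

lemma exists_min_steiner:
  assumes "finite V" "steiner_tree V T X"
  shows "\<exists>M. min_steiner V T w M"
proof -
  let ?ST = "{X. steiner_tree V T X}" and ?cost = "\<lambda>Y. sum w (snd Y)"
  have "finite ?ST" using finite_steiner_trees[OF assms(1)] .
  moreover have "?ST \<noteq> {}" using assms(2) by blast
  ultimately show ?thesis
    using arg_min_if_finite(1)[of ?ST ?cost] arg_min_least[of ?ST _ ?cost]
    unfolding min_steiner_def by blast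
qed

lemma stable_opt_min_perturbed:
  assumes stable: "stable_with_opt \<gamma> V T OPT" and "finite V" and pert: "perturbation \<gamma> V w'"
  shows "min_steiner V T w' OPT"
proof -
  have "steiner_tree V T OPT" using stable unfolding stable_with_opt_def min_steiner_def by blast
  then obtain M where "min_steiner V T w' M" using exists_min_steiner \<open>finite V\<close> by blast
  moreover have "M = OPT" using calculation stable pert unfolding stable_with_opt_def by blast
  ultimately show ?thesis by simp
qed

lemma stable_opt_gap:
  fixes OPT :: "'a::metric_space set \<times> 'a set set"
  assumes stable: "stable_with_opt \<gamma> V T OPT" and finV: "finite V" and \<gamma>: "1 \<le> \<gamma>"
    and G: "T \<subseteq> S" "S \<subseteq> V" "S \<noteq> {}" "edges_in S G" "connected_on S G"
    and missing: "\<not> snd OPT \<subseteq> G"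
  shows "\<gamma> * sum edist (snd OPT - G) < sum edist (G - snd OPT)"
proof (rule ccontr)
  define E where "E = snd OPT"
  assume "\<not> ?thesis"
  then have cheap: "sum edist (G - E) \<le> \<gamma> * sum edist (E - G)" unfolding E_def by linarith
  txt \<open>Scaling the weights outside \<open>G\<close> by \<open>\<gamma>\<close> makes a spanning tree of \<open>G\<close> no worse than OPT.\<close>
  define w' where "w' e = (if e \<in> G then 1 else \<gamma>) * edist e" for e
  have pert: "perturbation \<gamma> V w'"
    unfolding perturbation_def w'_def using \<gamma> by (auto simp: edist_eq)
  then have min': "min_steiner V T w' OPT" using stable_opt_min_perturbed[OF stable finV] by blast
  have finS: "finite S" using finV G(2) finite_subset by blast
  obtain F where F: "F \<subseteq> G" "is_tree S F" using exists_spanning_tree[OF finS G(3,4,5)] by blast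
  have stX: "steiner_tree V T (S, F)" unfolding steiner_tree_def using F G by auto
  have finG: "finite G" using edges_in_finite[OF finS G(4)] .
  have "steiner_tree V T OPT" using min' unfolding min_steiner_def by blast
  then have finE: "finite E"
    using edges_in_finite unfolding E_def steiner_tree_def is_tree_iff by blast
  have "sum w' F \<le> sum w' G"
    using finG F(1) edist_nonneg[OF G(4)] by (intro sum_mono2) (auto simp: w'_def)
  also have "\<dots> = sum edist (G \<inter> E) + sum edist (G - E)"
    unfolding w'_def using sum.Int_Diff[OF finG] by simp
  also have "\<dots> \<le> sum edist (E \<inter> G) + \<gamma> * sum edist (E - G)"
    using cheap by (simp add: Int_commute)
  also have "\<dots> = sum w' E"
  proof -
    have "sum w' (E \<inter> G) = sum edist (E \<inter> G)" by (rule sum.cong) (auto simp: w'_def)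
    moreover have "sum w' (E - G) = \<gamma> * sum edist (E - G)"
      unfolding sum_distrib_left by (rule sum.cong) (auto simp: w'_def)
    ultimately show ?thesis using sum.Int_Diff[OF finE, of w' G] by simp
  qed
  finally have "sum w' F \<le> sum w' E" .
  then have "min_steiner V T w' (S, F)"
    using min' stX unfolding min_steiner_def E_def by force
  then have "(S, F) = OPT" using stable pert unfolding stable_with_opt_def by blast
  then show False using F(1) missing by auto
qed

lemma bypass_removed_weight:
  fixes G :: "'a::metric_space set set"
  assumes edges: "edges_in S G" and fin: "finite G" and st: "adj G s t"
  shows "\<not> G \<subseteq> bypass G s t" "(\<Sum>z\<in>{z. adj G s z}. dist s z) \<le> sum edist (G - bypass G s t)"
proof -
  let ?N = "{z. adj G s z}"
  have nbr: "z \<noteq> s" "{s, z} \<in> G" if "z \<in> ?N" for z using that unfolding adj_def by auto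
  have star: "(\<lambda>z. {s, z}) ` ?N \<subseteq> G - bypass G s t"
  proof
    fix e assume "e \<in> (\<lambda>z. {s, z}) ` ?N"
    then obtain z where z: "adj G s z" "e = {s, z}" by blast
    have "e \<notin> bypass G s t"
    proof
      assume "e \<in> bypass G s t"
      then obtain z' where "adj G s z'" "e = {t, z'}" using z(2) unfolding bypass_def by blast
      then show False using z st unfolding adj_def by (auto simp: doubleton_eq_iff)
    qed
    then show "e \<in> G - bypass G s t" using z unfolding adj_def by simp
  qed
  then show "\<not> G \<subseteq> bypass G s t" using st by blast
  have "(\<Sum>z\<in>?N. dist s z) = sum edist ((\<lambda>z. {s, z}) ` ?N)"
    by (subst sum.reindex) (auto simp: inj_on_def doubleton_eq_iff nbr edist_eq)
  also have "\<dots> \<le> sum edist (G - bypass G s t)"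
    using fin star edist_nonneg[OF edges] by (intro sum_mono2) auto
  finally show "(\<Sum>z\<in>?N. dist s z) \<le> sum edist (G - bypass G s t)" .
qed

lemma bypass_added_weight:
  fixes G :: "'a::metric_space set set"
  assumes st: "adj G s t" and fin: "finite {z. adj G s z}"
  shows "sum edist (bypass G s t - G)
    \<le> (real (card {z. adj G s z}) - 2) * dist s t + (\<Sum>z\<in>{z. adj G s z}. dist s z)"
proof -
  let ?N = "{z. adj G s z}"
  have t: "t \<in> ?N" using st by simp
  have "sum edist (bypass G s t - G) \<le> sum edist ((\<lambda>z. {t, z}) ` (?N - {t}))"
    using fin by (intro sum_mono2) (auto simp: bypass_def edist_eq)
  also have "\<dots> \<le> sum (edist \<circ> (\<lambda>z. {t, z})) (?N - {t})"
    by (rule sum_image_le) (auto simp: edist_eq fin)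
  also have "\<dots> \<le> (\<Sum>z\<in>?N - {t}. dist s t + dist s z)"
    by (intro sum_mono) (simp add: edist_eq, metis dist_commute dist_triangle)
  also have "\<dots> = real (card (?N - {t})) * dist s t + ((\<Sum>z\<in>?N. dist s z) - dist s t)"
    using sum.remove[OF fin t, of "dist s"] by (simp add: sum.distrib)
  also have "real (card (?N - {t})) = real (card ?N) - 1"
    using card.remove[OF fin t] by simp
  finally show ?thesis by (simp add: algebra_simps)
qed

lemma tcomp_self: "x \<in> tcomp T VH EH x"
  unfolding tcomp_def comp_def by auto

lemma reach_if_tcomp_eq:
  assumes "u \<noteq> v" "tcomp T VH EH u = tcomp T VH EH v"
  shows "(adj EH)\<^sup>*\<^sup>* u v"
proof -
  have "v \<in> tcomp T VH EH u" using tcomp_self[of v] assms(2) by simp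
  then show ?thesis using assms(1) unfolding tcomp_def comp_def by (auto split: if_splits)
qed

lemma tcomp_eq_if_reach:
  assumes H: "\<forall>e\<in>EH. e \<subseteq> VH" and r: "(adj EH)\<^sup>*\<^sup>* u v" and "u \<noteq> v"
  shows "u \<in> VH" "v \<in> VH" "tcomp T VH EH u = tcomp T VH EH v"
proof -
  have adjH: "x \<in> VH \<and> y \<in> VH" if "adj EH x y" for x y using H that unfolding adj_def by blast
  show "u \<in> VH" using r \<open>u \<noteq> v\<close> by (cases rule: converse_rtranclpE) (auto dest: adjH)
  show "v \<in> VH" using r \<open>u \<noteq> v\<close> by (cases rule: rtranclp.cases) (auto dest: adjH)
  have "(adj EH)\<^sup>*\<^sup>* u w \<longleftrightarrow> (adj EH)\<^sup>*\<^sup>* v w" for w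
    using rtranclp_trans[OF r, of w] rtranclp_trans[OF reach_sym[OF r], of w] by blast
  then show "tcomp T VH EH u = tcomp T VH EH v"
    using \<open>u \<in> VH\<close> \<open>v \<in> VH\<close> unfolding tcomp_def comp_def by simp
qed

lemma avg_weight_nonneg: "0 \<le> avg_weight c l"
proof (cases "l = []")
  case False
  then have "0 \<le> real (length l) - 1" by (cases l) auto
  then show ?thesis unfolding avg_weight_def by (intro divide_nonneg_nonneg sum_nonneg) auto
qed (simp add: avg_weight_def)

lemma sum_nth_distinct:
  assumes "distinct xs"
  shows "(\<Sum>i<length xs. f (xs ! i)) = sum f (set xs)"
proof -
  have "inj_on ((!) xs) {..<length xs}" using assms by (simp add: inj_on_def nth_eq_iff_index_eq)
  moreover have "set xs = (!) xs ` {..<length xs}" by (auto simp: set_conv_nth)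
  ultimately show ?thesis by (simp add: sum.reindex)
qed

text \<open>The constant 1.755 lies just above the real root (about 1.7549) of \<open>\<gamma> (\<gamma> - 1)\<^sup>2 = 1\<close>.\<close>

lemma gamma_bounds:
  fixes \<gamma> :: real
  assumes \<gamma>: "1.755 < \<gamma>"
  shows "1 \<le> \<gamma> * (\<gamma> - 1)" "1 \<le> \<gamma> * (\<gamma> - 1) * (\<gamma> - 1)"
proof -
  have g: "0.755 < \<gamma> - 1" using \<gamma> by simp
  have "(1.755::real) * 0.755 < \<gamma> * (\<gamma> - 1)"
    by (rule mult_strict_mono) (use g \<gamma> in auto)
  then show "1 \<le> \<gamma> * (\<gamma> - 1)" by simp
  have "(0.755::real) * 0.755 < (\<gamma> - 1) * (\<gamma> - 1)"
    by (rule mult_strict_mono) (use g in auto)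
  then have "(1.755::real) * (0.755 * 0.755) < \<gamma> * ((\<gamma> - 1) * (\<gamma> - 1))"
    by (intro mult_strict_mono) (use \<gamma> in auto)
  moreover have "(1::real) < 1.755 * (0.755 * 0.755)" by simp
  ultimately have "1 < \<gamma> * ((\<gamma> - 1) * (\<gamma> - 1))" by linarith
  then show "1 \<le> \<gamma> * (\<gamma> - 1) * (\<gamma> - 1)" unfolding mult.assoc by linarith
qed

lemma fan_weight_arith:
  fixes \<gamma> A d :: real
  assumes \<gamma>: "1.755 < \<gamma>" and A: "0 \<le> A" and d: "A < d \<or> (\<gamma> - 1) * A < d"
  shows "A \<le> \<gamma> * d" "A / (\<gamma> - 1) \<le> \<gamma> * d"
proof -
  have g: "0 < \<gamma> - 1" and gg: "0 \<le> \<gamma> * (\<gamma> - 1)" using \<gamma> by simp_all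
  have A1: "A \<le> \<gamma> * (\<gamma> - 1) * A" using mult_right_mono[OF gamma_bounds(1)[OF \<gamma>] A] by simp
  have "A \<le> \<gamma> * d \<and> A \<le> \<gamma> * (\<gamma> - 1) * d"
  proof (cases "A < d")
    case True
    have "1 * d \<le> \<gamma> * d" using True A \<gamma> by (intro mult_right_mono) auto
    moreover have "\<gamma> * (\<gamma> - 1) * A \<le> \<gamma> * (\<gamma> - 1) * d" using True gg by (intro mult_left_mono) auto
    ultimately show ?thesis using True A1 by linarith
  next
    case False
    then have d': "(\<gamma> - 1) * A < d" using d by blast
    have "\<gamma> * ((\<gamma> - 1) * A) \<le> \<gamma> * d" using d' \<gamma> by (intro mult_left_mono) auto
    then have "A \<le> \<gamma> * d" using A1 by (simp add: mult.assoc)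
    have "A \<le> \<gamma> * (\<gamma> - 1) * (\<gamma> - 1) * A" using mult_right_mono[OF gamma_bounds(2)[OF \<gamma>] A] by simp
    also have "\<dots> = \<gamma> * (\<gamma> - 1) * ((\<gamma> - 1) * A)" by algebra
    also have "\<dots> \<le> \<gamma> * (\<gamma> - 1) * d" using d' gg by (intro mult_left_mono) auto
    finally show ?thesis using \<open>A \<le> \<gamma> * d\<close> by blast
  qed
  then show "A \<le> \<gamma> * d" "A / (\<gamma> - 1) \<le> \<gamma> * d" using g by (auto simp: pos_divide_le_eq mult_ac)
qed

locale steiner_fan =
  fixes V T :: "'a::metric_space set" and OPT :: "'a set \<times> 'a set set"
    and VH :: "'a set" and EH :: "'a set set" and a :: 'a and b :: "'a list" and \<gamma> :: real
  assumes gamma: "\<gamma> > 1.755"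
    and finite_V: "finite V"
    and stable: "stable_with_opt \<gamma> V T OPT"
    and no_steiner_edge: "\<forall>u v. {u, v} \<in> snd OPT \<longrightarrow> u \<in> T \<or> v \<in> T"
    and H_subgraph: "subgraph VH EH OPT"
    and fan: "tc_fan V T VH EH a b"
    and fan_below_links: "\<forall>u\<in>V. \<forall>v\<in>V. u \<in> VH \<union> T \<longrightarrow> v \<in> VH \<union> T \<longrightarrow>
      tcomp T VH EH u \<noteq> tcomp T VH EH v \<longrightarrow> {u, v} \<notin> EH \<longrightarrow> avg_weight a b < dist u v"
    and fan_minimal: "\<forall>a' b'. tc_fan V T VH EH a' b' \<longrightarrow> avg_weight a b \<le> avg_weight a' b'"
    and fan_balanced: "\<forall>i<length b. \<forall>j<length b. dist a (b ! i) \<le> (1 / (\<gamma> - 1)) * dist a (b ! j)"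
begin

abbreviation "S \<equiv> fst OPT"
abbreviation "E \<equiv> snd OPT"
abbreviation "A \<equiv> avg_weight a b"
abbreviation "m \<equiv> length b"
abbreviation "tc \<equiv> tcomp T VH EH"

lemma gamma_ge_1: "1 \<le> \<gamma>"
  using gamma by simp

lemma opt: "is_tree S E" "T \<subseteq> S" "S \<subseteq> V"
  using stable unfolding stable_with_opt_def min_steiner_def steiner_tree_def by auto

lemma opt_props: "finite S" "S \<noteq> {}" "edges_in S E" "connected_on S E"
  using opt(1) unfolding is_tree_iff by auto

lemma H_props: "VH \<subseteq> S" "EH \<subseteq> E" "\<forall>e\<in>EH. e \<subseteq> VH"
  using H_subgraph unfolding subgraph_def by auto

lemma fan_props:
  "a \<in> V" "a \<notin> T" "2 \<le> m" "a \<notin> set b"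
  "\<And>i. i < m \<Longrightarrow> b ! i \<in> T \<or> b ! i \<in> VH \<and> 2 \<le> card (comp VH EH (b ! i))"
  "\<And>i j. i < m \<Longrightarrow> j < m \<Longrightarrow> i \<noteq> j \<Longrightarrow> tc (b ! i) \<noteq> tc (b ! j)"
  using fan unfolding tc_fan_def by auto

lemma leaf_in_S: "i < m \<Longrightarrow> b ! i \<in> S"
  using fan_props(5) H_props(1) opt(2) by blast

lemma leaf_ne_center: "i < m \<Longrightarrow> b ! i \<noteq> a"
  using fan_props(4) nth_mem by metis

lemma distinct_leaves: "distinct b"
  unfolding distinct_conv_nth using fan_props(6) by metis

lemma fan_total_weight: "(\<Sum>i<m. dist a (b ! i)) = (real m - 1) * A"
proof -
  have "real m - 1 > 0" using fan_props(3) by simp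
  then show ?thesis unfolding avg_weight_def by simp
qed

lemma leaf_dist_le: "j < m \<Longrightarrow> dist a (b ! j) \<le> A / (\<gamma> - 1)"
proof -
  assume j: "j < m"
  define \<rho> where "\<rho> = 1 / (\<gamma> - 1)"
  have \<rho>: "0 \<le> \<rho>" using gamma unfolding \<rho>_def by simp
  have "real m * dist a (b ! j) = (\<Sum>i<m. dist a (b ! j))" by simp
  also have "\<dots> \<le> (\<Sum>i<m. \<rho> * dist a (b ! i))"
    using fan_balanced j unfolding \<rho>_def by (intro sum_mono) auto
  also have "\<dots> = \<rho> * ((real m - 1) * A)" by (simp add: sum_distrib_left[symmetric] fan_total_weight)
  also have "\<dots> \<le> \<rho> * (real m * A)"
    using \<rho> avg_weight_nonneg by (intro mult_left_mono) (auto simp: algebra_simps)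
  finally have "real m * dist a (b ! j) \<le> real m * (\<rho> * A)" by (simp add: algebra_simps)
  moreover have "real m > 0" using fan_props(3) by (cases b) auto
  ultimately have "dist a (b ! j) \<le> \<rho> * A" using mult_le_cancel_left_pos by blast
  then show ?thesis unfolding \<rho>_def by simp
qed

lemma opt_edge_links_tcomps:
  assumes e: "{u, v} \<in> E" "{u, v} \<notin> EH"
  shows "tc u \<noteq> tc v"
proof
  assume "tc u = tc v"
  moreover have "u \<noteq> v" using edges_in_mem[OF opt_props(3) e(1)] by blast
  ultimately have "(adj EH)\<^sup>*\<^sup>* u v" by (rule reach_if_tcomp_eq[rotated])
  moreover have "EH \<subseteq> E - {{u, v}}" using H_props(2) e(2) by blast
  ultimately have "(adj (E - {{u, v}}))\<^sup>*\<^sup>* u v" by (rule reach_mono[rotated])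
  then show False using tree_remove_edge_disconnects[OF opt(1) e(1)] by contradiction
qed

lemma steiner_nbrs_distinct_tcomps:
  assumes s: "s \<notin> VH" and z: "adj E s z" "adj E s z'" "z \<noteq> z'"
  shows "tc z \<noteq> tc z'"
proof
  assume "tc z = tc z'"
  then have "(adj EH)\<^sup>*\<^sup>* z' z" using reach_if_tcomp_eq[of z' z T VH EH] z(3) by auto
  moreover have "EH \<subseteq> E - {{s, z}}" using H_props(2,3) s by blast
  ultimately have "(adj (E - {{s, z}}))\<^sup>*\<^sup>* z' z" by (rule reach_mono[rotated])
  moreover have "adj (E - {{s, z}}) s z'" using z unfolding adj_def by (auto simp: doubleton_eq_iff)
  ultimately have "(adj (E - {{s, z}}))\<^sup>*\<^sup>* s z" by (rule converse_rtranclp_into_rtranclp[rotated])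
  moreover have "{s, z} \<in> E" using z(1) unfolding adj_def by simp
  ultimately show False using tree_remove_edge_disconnects[OF opt(1)] by blast
qed

lemma steiner_nbrs_finite: "finite {z. adj E s z}"
proof -
  have "{z. adj E s z} \<subseteq> S" using edges_in_adj[OF opt_props(3)] by blast
  then show ?thesis using opt_props(1) by (rule finite_subset)
qed

lemma steiner_nbrs_fan:
  assumes s: "s \<in> S" "s \<notin> T" "s \<notin> VH"
    and l: "set l = {z. adj E s z}" "distinct l" "2 \<le> length l"
  shows "tc_fan V T VH EH s l"
proof -
  have nbr: "z \<in> T \<and> z \<in> V \<and> z \<noteq> s" if "z \<in> set l" for z
  proof -
    have "adj E s z" using that l(1) by blast
    then have "s \<noteq> z" "{s, z} \<in> E" "z \<in> S"
      using edges_in_adj[OF opt_props(3)] unfolding adj_def by auto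
    then show ?thesis using no_steiner_edge s(2) opt(3) by blast
  qed
  show ?thesis
    unfolding tc_fan_def
  proof (intro conjI allI impI)
    show "s \<in> V - T" using s opt(3) by blast
    show "2 \<le> length l" by (fact l(3))
    show "set l \<subseteq> V" "s \<notin> set l" using nbr by blast+
    fix i j assume i: "i < length l"
    show "l ! i \<in> T \<or> l ! i \<in> VH \<and> 2 \<le> card (comp VH EH (l ! i))"
      using nbr nth_mem[OF i] by blast
    assume j: "j < length l" "i \<noteq> j"
    have "adj E s (l ! i)" "adj E s (l ! j)" using l(1) nth_mem i j(1) by blast+
    moreover have "l ! i \<noteq> l ! j" using l(2) i j by (simp add: nth_eq_iff_index_eq)
    ultimately show "tc (l ! i) \<noteq> tc (l ! j)" by (rule steiner_nbrs_distinct_tcomps[OF s(3)])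
  qed
qed

lemma steiner_star_weight:
  assumes s: "s \<notin> T" and t: "adj E s t"
  defines "N \<equiv> {z. adj E s z}"
  shows "(\<gamma> - 1) * (\<Sum>z\<in>N. dist s z) < (real (card N) - 2) * dist s t"
proof -
  define G where "G = bypass E s t"
  define W where "W = (\<Sum>z\<in>N. dist s z)"
  have removed: "\<not> E \<subseteq> G" "W \<le> sum edist (E - G)"
    using bypass_removed_weight[OF opt_props(3) edges_in_finite[OF opt_props(1,3)] t]
    unfolding G_def W_def N_def by auto
  have "S - {s} \<noteq> {}" using edges_in_adj[OF opt_props(3) t] t unfolding adj_def by auto
  then have "\<gamma> * sum edist (E - G) < sum edist (G - E)"
    using stable_opt_gap[OF stable finite_V gamma_ge_1 _ _ _ edges_in_bypass[OF opt_props(3) t]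
        connected_on_bypass[OF opt_props(4,3) t]] removed(1) opt s
    unfolding G_def by blast
  moreover have "\<gamma> * W \<le> \<gamma> * sum edist (E - G)"
    using removed(2) gamma by (intro mult_left_mono) auto
  moreover have "sum edist (G - E) \<le> (real (card N) - 2) * dist s t + W"
    using bypass_added_weight[OF t steiner_nbrs_finite] unfolding G_def W_def N_def .
  moreover have "(\<gamma> - 1) * W = \<gamma> * W - W" by (simp add: algebra_simps)
  ultimately show ?thesis unfolding W_def[symmetric] by linarith
qed

lemma steiner_edge_weight:
  assumes e: "{s, t} \<in> E" and s: "s \<notin> T" "s \<notin> VH"
  shows "(\<gamma> - 1) * A < dist s t"
proof -
  define N where "N = {z. adj E s z}"
  define W where "W = (\<Sum>z\<in>N. dist s z)"
  define r where "r = real (card N)"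
  have st: "adj E s t" using e edges_in_mem[OF opt_props(3) e] unfolding adj_def by simp
  have sS: "s \<in> S" using edges_in_adj[OF opt_props(3) st] by blast
  have star: "(\<gamma> - 1) * W < (r - 2) * dist s t"
    using steiner_star_weight[OF s(1) st] unfolding N_def W_def r_def .
  have W: "0 \<le> W" unfolding W_def by (simp add: sum_nonneg)
  have r: "3 \<le> r"
  proof (rule ccontr)
    assume "\<not> 3 \<le> r"
    then have "r - 2 \<le> 0" unfolding r_def by simp
    then have "(r - 2) * dist s t \<le> 0" by (simp add: mult_nonpos_nonneg)
    moreover have "0 \<le> (\<gamma> - 1) * W" using gamma W by simp
    ultimately show False using star by linarith
  qed
  obtain l where l: "set l = N" "distinct l"
    using finite_distinct_list[OF steiner_nbrs_finite[of s]] unfolding N_def by blast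
  have len: "real (length l) = r" using distinct_card[OF l(2)] l(1) unfolding r_def by simp
  then have "2 \<le> length l" using r by simp
  then have "tc_fan V T VH EH s l"
    using steiner_nbrs_fan[OF sS s(1,2)] l unfolding N_def by blast
  then have "A \<le> avg_weight s l" using fan_minimal by blast
  also have "avg_weight s l = W / (r - 1)"
    unfolding avg_weight_def W_def using sum_nth_distinct[OF l(2), of "dist s"] l(1) len by simp
  finally have "(r - 1) * A \<le> W" using r by (simp add: pos_le_divide_eq mult.commute)
  then have "(\<gamma> - 1) * ((r - 1) * A) \<le> (\<gamma> - 1) * W" by (rule mult_left_mono) (use gamma in auto)
  then have "(r - 1) * ((\<gamma> - 1) * A) \<le> (\<gamma> - 1) * W" by (metis mult.left_commute)
  also have "\<dots> < (r - 2) * dist s t" by (fact star)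
  also have "\<dots> \<le> (r - 1) * dist s t" by (intro mult_right_mono) auto
  finally show ?thesis using mult_less_cancel_left_pos[of "r - 1"] r by simp
qed

lemma opt_edge_outside_H_weight:
  assumes e: "{u, v} \<in> E" "{u, v} \<notin> EH"
  shows "A \<le> \<gamma> * dist u v" "A / (\<gamma> - 1) \<le> \<gamma> * dist u v"
proof -
  have bound: "A < dist u v \<or> (\<gamma> - 1) * A < dist u v"
  proof (cases "u \<in> VH \<union> T \<and> v \<in> VH \<union> T")
    case True
    moreover have "u \<in> V" "v \<in> V" using edges_in_mem[OF opt_props(3) e(1)] opt(3) by auto
    ultimately show ?thesis using fan_below_links opt_edge_links_tcomps[OF e] e(2) by blast
  next
    case False
    then consider "u \<notin> T" "u \<notin> VH" | "v \<notin> T" "v \<notin> VH" by blast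
    then show ?thesis
    proof cases
      case 1
      then show ?thesis using steiner_edge_weight[OF e(1)] by blast
    next
      case 2
      have "{v, u} \<in> E" using e(1) by (simp add: insert_commute)
      then have "(\<gamma> - 1) * A < dist v u" using steiner_edge_weight 2 by blast
      then show ?thesis by (simp add: dist_commute)
    qed
  qed
  show "A \<le> \<gamma> * dist u v" "A / (\<gamma> - 1) \<le> \<gamma> * dist u v"
    using fan_weight_arith[OF gamma avg_weight_nonneg bound] by auto
qed

lemma leaves_in_S: "set b \<subseteq> S"
  using leaf_in_S by (auto simp: in_set_conv_nth)

lemma leaf_swap_le:
  assumes j: "j < m" and t: "t \<in> S" "t \<noteq> a" "t \<in> VH" "2 \<le> card (comp VH EH t)"
    "tc t = tc (b ! j)"
  shows "dist a (b ! j) \<le> dist a t"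
proof -
  define b' where "b' = b[j := t]"
  have len: "length b' = m" unfolding b'_def by simp
  have nth': "b' ! i = (if i = j then t else b ! i)" if "i < m" for i
    using that j unfolding b'_def by simp
  have tc': "tc (b' ! i) = tc (b ! i)" if "i < m" for i using nth'[OF that] t(5) by simp
  have "tc_fan V T VH EH a b'"
    unfolding tc_fan_def
  proof (intro conjI allI impI)
    have "set b' \<subseteq> insert t (set b)" unfolding b'_def by (rule set_update_subset_insert)
    then show "set b' \<subseteq> V" "a \<notin> set b'"
      using leaves_in_S opt(3) t(1,2) fan_props(4) by blast+
    show "a \<in> V - T" using fan_props(1,2) by blast
    show "2 \<le> length b'" using len fan_props(3) by simp
    fix i assume i: "i < length b'"
    then have im: "i < m" using len by simp
    show "b' ! i \<in> T \<or> b' ! i \<in> VH \<and> 2 \<le> card (comp VH EH (b' ! i))"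
      using nth'[OF im] fan_props(5)[OF im] t(3,4) by auto
    fix k assume k: "k < length b'" "i \<noteq> k"
    then show "tc (b' ! i) \<noteq> tc (b' ! k)" using tc' fan_props(6)[OF im _ k(2)] len im by auto
  qed
  then have "A \<le> avg_weight a b'" using fan_minimal by blast
  also have "avg_weight a b' = ((real m - 1) * A - dist a (b ! j) + dist a t) / (real m - 1)"
  proof -
    have fin: "finite {..<m}" and jm: "j \<in> {..<m}" using j by auto
    have "(\<Sum>i<m. dist a (b' ! i)) = dist a t + (\<Sum>i\<in>{..<m} - {j}. dist a (b' ! i))"
      using sum.remove[OF fin jm, of "\<lambda>i. dist a (b' ! i)"] nth'[OF j] by simp
    also have "(\<Sum>i\<in>{..<m} - {j}. dist a (b' ! i)) = (\<Sum>i\<in>{..<m} - {j}. dist a (b ! i))"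
      using nth' by (intro sum.cong) auto
    also have "\<dots> = (\<Sum>i<m. dist a (b ! i)) - dist a (b ! j)"
      using sum.remove[OF fin jm, of "\<lambda>i. dist a (b ! i)"] by simp
    finally have sum': "(\<Sum>i<m. dist a (b' ! i)) = dist a t + ((real m - 1) * A - dist a (b ! j))"
      unfolding fan_total_weight .
    have "avg_weight a b' = (\<Sum>i<m. dist a (b' ! i)) / (real m - 1)"
      unfolding avg_weight_def len ..
    then show ?thesis unfolding sum' by simp
  qed
  finally show ?thesis using fan_props(3) by (simp add: pos_le_divide_eq algebra_simps)
qed

lemma leaf_dist_le_H_neighbour:
  assumes j: "j < m" and a: "a \<in> VH" "tc a = tc (b ! j)" and at: "adj EH a t"
  shows "dist a (b ! j) \<le> dist a t"
proof -
  have "a \<noteq> t" using at unfolding adj_def by simp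
  then have t: "t \<in> VH" "tc a = tc t"
    using tcomp_eq_if_reach[OF H_props(3) r_into_rtranclp[of "adj EH", OF at]] by auto
  have "adj EH t a" using sympD[OF symp_adj at] .
  then have "a \<in> comp VH EH t" "t \<in> comp VH EH t"
    using a(1) t(1) unfolding comp_def by (simp_all add: r_into_rtranclp)
  moreover have "finite (comp VH EH t)"
  proof (rule finite_subset)
    show "comp VH EH t \<subseteq> S" using H_props(1) unfolding comp_def by blast
  qed (rule opt_props(1))
  ultimately have "card {a, t} \<le> card (comp VH EH t)" by (intro card_mono) auto
  then have "2 \<le> card (comp VH EH t)" using \<open>a \<noteq> t\<close> by simp
  moreover have "t \<in> S" using H_props(1) t(1) by blast
  ultimately show ?thesis using leaf_swap_le[OF j] \<open>a \<noteq> t\<close> t a(2) by simp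
qed

lemma leaf_exchange_edge:
  assumes aS: "a \<in> S" and j: "j < m"
  obtains x y where "{x, y} \<in> E" "dist a (b ! j) \<le> \<gamma> * dist x y"
    "(adj (E - {{x, y}}))\<^sup>*\<^sup>* a x" "(adj (E - {{x, y}}))\<^sup>*\<^sup>* y (b ! j)"
proof -
  have reach: "(adj E)\<^sup>*\<^sup>* a (b ! j)"
    using opt_props(4) aS leaf_in_S[OF j] unfolding connected_on_def by blast
  have ne: "a \<noteq> b ! j" using leaf_ne_center[OF j] by blast
  show thesis
  proof (cases "(adj EH)\<^sup>*\<^sup>* a (b ! j)")
    case False
    then obtain x y where xy: "adj E x y" "{x, y} \<notin> EH"
      "(adj (E - {{x, y}}))\<^sup>*\<^sup>* a x" "(adj (E - {{x, y}}))\<^sup>*\<^sup>* y (b ! j)"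
      using reach_exit_edge[OF reach] by blast
    have "{x, y} \<in> E" using xy(1) unfolding adj_def by simp
    moreover have "dist a (b ! j) \<le> \<gamma> * dist x y"
      using leaf_dist_le[OF j] opt_edge_outside_H_weight(2)[OF \<open>{x, y} \<in> E\<close> xy(2)] by linarith
    ultimately show thesis using that xy(3,4) by blast
  next
    case True
    txt \<open>The first tree edge \<open>a t\<close> either leaves \<open>H\<close>, or \<open>t\<close> may replace \<open>b ! j\<close> in the fan.\<close>
    have a: "a \<in> VH" "tc a = tc (b ! j)" using tcomp_eq_if_reach[OF H_props(3) True ne] by auto
    obtain t where t: "adj E a t" "(adj (E - {{a, t}}))\<^sup>*\<^sup>* t (b ! j)"
      using reach_first_edge[OF reach ne] by blast
    have at: "{a, t} \<in> E" "a \<noteq> t" using t(1) unfolding adj_def by auto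
    have "dist a (b ! j) \<le> \<gamma> * dist a t"
    proof (cases "{a, t} \<in> EH")
      case True
      then have "dist a (b ! j) \<le> dist a t"
        using leaf_dist_le_H_neighbour[OF j a] at(2) unfolding adj_def by simp
      then show ?thesis using gamma_ge_1 mult_right_mono[of 1 \<gamma> "dist a t"] by simp
    next
      case False
      then show ?thesis using leaf_dist_le[OF j] opt_edge_outside_H_weight(2)[OF at(1)] by fastforce
    qed
    then show thesis using that[OF at(1)] t(2) by simp
  qed
qed

lemma leaf_edge_in_opt_if_center_in_S:
  assumes aS: "a \<in> S" and j: "j < m"
  shows "{a, b ! j} \<in> E"
proof (rule ccontr)
  assume notin: "{a, b ! j} \<notin> E"
  obtain x y where xy: "{x, y} \<in> E" "dist a (b ! j) \<le> \<gamma> * dist x y"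
    "(adj (E - {{x, y}}))\<^sup>*\<^sup>* a x" "(adj (E - {{x, y}}))\<^sup>*\<^sup>* y (b ! j)"
    using leaf_exchange_edge[OF aS j] .
  define G where "G = E - {{x, y}} \<union> {{a, b ! j}}"
  have bS: "b ! j \<in> S" using leaf_in_S[OF j] .
  have ne: "a \<noteq> b ! j" using leaf_ne_center[OF j] by blast
  have xS: "x \<in> S" using edges_in_mem[OF opt_props(3) xy(1)] by blast
  have G_con: "connected_on S G"
    unfolding G_def using connected_on_exchange[OF opt_props(4) xS aS bS xy(3,4)] .
  have "edges_in S (insert {a, b ! j} (E - {{x, y}}))"
    using edges_in_insert[OF edges_in_subset[OF _ opt_props(3)] subset_refl ne aS bS] by blast
  then have G_edges: "edges_in S G" unfolding G_def by simp
  have "{x, y} \<noteq> {a, b ! j}" using xy(1) notin by auto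
  then have out: "E - G = {{x, y}}" using xy(1) unfolding G_def by auto
  have "G - E = {{a, b ! j}}" using notin unfolding G_def by auto
  moreover have "\<gamma> * sum edist (E - G) < sum edist (G - E)"
    by (rule stable_opt_gap[OF stable finite_V gamma_ge_1 opt(2,3) opt_props(2) G_edges G_con])
      (use out in blast)
  ultimately show False using xy(2) out by (simp add: edist_eq)
qed

definition fan_edges :: "nat \<Rightarrow> 'a set set" where
  "fan_edges k = (\<lambda>z. {a, z}) ` set (take k b)"

lemma fan_edges_Suc: "k < m \<Longrightarrow> fan_edges (Suc k) = insert {a, b ! k} (fan_edges k)"
  unfolding fan_edges_def by (simp add: take_Suc_conv_app_nth)

lemma center_notin_opt_edge:
  assumes "a \<notin> S" "e \<in> E"
  shows "a \<notin> e"
proof -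
  obtain u v where "e = {u, v}" "u \<in> S" "v \<in> S"
    using opt_props(3) assms(2) unfolding edges_in_def by blast
  then show ?thesis using assms(1) by blast
qed

lemma attached_edges_in: "edges_in (insert a S) (E - R \<union> fan_edges k)"
  unfolding edges_in_def
proof
  fix e assume "e \<in> E - R \<union> fan_edges k"
  then consider "e \<in> E" | z where "z \<in> set b" "e = {a, z}"
    unfolding fan_edges_def by (auto dest: in_set_takeD)
  then show "\<exists>u v. e = {u, v} \<and> u \<noteq> v \<and> u \<in> insert a S \<and> v \<in> insert a S"
  proof cases
    case 1
    then obtain u v where "e = {u, v}" "u \<noteq> v" "u \<in> S" "v \<in> S"
      using opt_props(3) unfolding edges_in_def by blast
    then show ?thesis by blast
  next
    case 2
    then show ?thesis using leaves_in_S fan_props(4) by blast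
  qed
qed

lemma attach_step:
  assumes aS: "a \<notin> S" and k: "k < m" and R: "R \<subseteq> E - EH"
    and con: "connected_on (insert a S) (E - R \<union> fan_edges k)"
  obtains r where "r \<in> E - EH - R" "connected_on (insert a S) (E - insert r R \<union> fan_edges (Suc k))"
proof -
  define G where "G = E - R \<union> fan_edges k"
  have bk: "b ! k \<in> S" "b ! k \<noteq> a" using leaf_in_S[OF k] leaf_ne_center[OF k] by auto
  have reach: "(adj G)\<^sup>*\<^sup>* a (b ! k)" using con bk(1) unfolding G_def connected_on_def by blast
  txt \<open>Such a path would join \<open>b ! k\<close> inside \<open>H\<close> to one of the leaves attached before.\<close>
  have not_H: "\<not> (adj (EH \<union> fan_edges k))\<^sup>*\<^sup>* a (b ! k)"
  proof
    assume "(adj (EH \<union> fan_edges k))\<^sup>*\<^sup>* a (b ! k)"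
    moreover have "\<forall>e\<in>EH. a \<notin> e" using H_props aS by blast
    ultimately obtain z where z: "z \<in> set (take k b)" "(adj EH)\<^sup>*\<^sup>* z (b ! k)"
      using reach_from_hub[of EH a "set (take k b)" "b ! k"] bk(2) unfolding fan_edges_def by blast
    then obtain i where i: "i < k" "z = b ! i" using k by (auto simp: in_set_conv_nth)
    have "z \<noteq> b ! k" using distinct_leaves i k by (simp add: nth_eq_iff_index_eq)
    then have "tc z = tc (b ! k)" using tcomp_eq_if_reach[OF H_props(3) z(2)] by blast
    then show False using fan_props(6)[of i k] i k by simp
  qed
  obtain x y where xy: "adj G x y" "{x, y} \<notin> EH \<union> fan_edges k"
    "(adj (G - {{x, y}}))\<^sup>*\<^sup>* a x" "(adj (G - {{x, y}}))\<^sup>*\<^sup>* y (b ! k)"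
    using reach_exit_edge[OF reach not_H] by blast
  have r: "{x, y} \<in> E - EH - R" using xy(1,2) unfolding adj_def G_def by blast
  have "x \<in> insert a S" using edges_in_adj[OF attached_edges_in] xy(1) unfolding G_def by blast
  then have "connected_on (insert a S) (G - {{x, y}} \<union> {{a, b ! k}})"
    using connected_on_exchange[OF con[folded G_def] _ insertI1 _ xy(3,4)] bk(1) by blast
  moreover have "G - {{x, y}} \<union> {{a, b ! k}} = E - insert {x, y} R \<union> fan_edges (Suc k)"
    using xy(2) unfolding G_def fan_edges_Suc[OF k] by blast
  ultimately show thesis using that r by simp
qed

lemma attach_first: "connected_on (insert a S) (E \<union> fan_edges 1)"
proof -
  have m0: "0 < m" using fan_props(3) by (cases b) auto
  have b0: "b ! 0 \<in> S" "b ! 0 \<noteq> a" using leaf_in_S[OF m0] leaf_ne_center[OF m0] by auto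
  have "fan_edges 1 = {{a, b ! 0}}" using m0 unfolding fan_edges_def by (cases b) auto
  moreover have "connected_on (insert a S) (E \<union> {{a, b ! 0}})"
  proof (rule connected_onI)
    fix w assume "w \<in> insert a S"
    then consider "w = a" | "w \<in> S" by blast
    then show "(adj (E \<union> {{a, b ! 0}}))\<^sup>*\<^sup>* (b ! 0) w"
    proof cases
      case 1
      then show ?thesis using b0(2) unfolding adj_def by auto
    next
      case 2
      then have "(adj E)\<^sup>*\<^sup>* (b ! 0) w" using opt_props(4) b0(1) unfolding connected_on_def by blast
      then show ?thesis by (rule reach_mono[rotated]) blast
    qed
  qed
  ultimately show ?thesis by simp
qed

lemma attach_all:
  assumes aS: "a \<notin> S"
  obtains R where "R \<subseteq> E - EH" "card R + 1 = m" "connected_on (insert a S) (E - R \<union> fan_edges m)"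
proof -
  have finE: "finite E" using edges_in_finite[OF opt_props(1,3)] .
  have grow: "\<exists>R\<subseteq>E - EH. card R + 1 = k \<and> connected_on (insert a S) (E - R \<union> fan_edges k)"
    if "1 \<le> k" "k \<le> m" for k
    using that
  proof (induction k)
    case (Suc k)
    show ?case
    proof (cases "k = 0")
      case True
      then show ?thesis using attach_first by (intro exI[of _ "{}"]) simp
    next
      case False
      then obtain R where R: "R \<subseteq> E - EH" "card R + 1 = k"
        "connected_on (insert a S) (E - R \<union> fan_edges k)" using Suc by auto
      obtain r where r: "r \<in> E - EH - R"
        "connected_on (insert a S) (E - insert r R \<union> fan_edges (Suc k))"
        using attach_step[OF aS _ R(1,3)] Suc.prems by auto
      have "finite R" using finite_subset[OF _ finE] R(1) by blast
      then have "card (insert r R) + 1 = Suc k" using R(2) r(1) by simp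
      then show ?thesis using R(1) r by (intro exI[of _ "insert r R"]) auto
    qed
  qed simp
  have "1 \<le> m" using fan_props(3) by simp
  then obtain R where "R \<subseteq> E - EH" "card R + 1 = m"
    "connected_on (insert a S) (E - R \<union> fan_edges m)"
    using grow[OF _ order_refl] by blast
  then show thesis by (rule that)
qed

lemma fan_edges_weight: "sum edist (fan_edges m) \<le> (real m - 1) * A"
proof -
  have "sum edist ((\<lambda>z. {a, z}) ` set b) \<le> sum (edist \<circ> (\<lambda>z. {a, z})) (set b)"
    by (rule sum_image_le) (auto simp: edist_eq)
  then have "sum edist (fan_edges m) \<le> sum (edist \<circ> (\<lambda>z. {a, z})) (set b)"
    unfolding fan_edges_def by simp
  also have "\<dots> = (real m - 1) * A"
    using sum_nth_distinct[OF distinct_leaves, of "dist a"] fan_total_weight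
    by (simp add: edist_eq o_def)
  finally show ?thesis .
qed

lemma center_in_S: "a \<in> S"
proof (rule ccontr)
  assume aS: "a \<notin> S"
  obtain R where R: "R \<subseteq> E - EH" "card R + 1 = m"
    and con: "connected_on (insert a S) (E - R \<union> fan_edges m)"
    using attach_all[OF aS] .
  define G where "G = E - R \<union> fan_edges m"
  have finE: "finite E" using edges_in_finite[OF opt_props(1,3)] .
  have R_out: "R \<subseteq> E - G"
    using R(1) center_notin_opt_edge[OF aS] unfolding G_def fan_edges_def by blast
  have "R \<noteq> {}" using R(2) fan_props(3) by auto
  have "sum edist (G - E) \<le> sum edist (fan_edges m)"
    unfolding G_def fan_edges_def by (intro sum_mono2) (auto simp: edist_eq)
  also have "\<dots> \<le> (real m - 1) * A" by (rule fan_edges_weight)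
  also have "\<dots> = (\<Sum>r\<in>R. A)" unfolding R(2)[symmetric] by simp
  also have "\<dots> \<le> (\<Sum>r\<in>R. \<gamma> * edist r)"
  proof (rule sum_mono)
    fix r assume "r \<in> R"
    then have "r \<in> E" "r \<notin> EH" using R(1) by auto
    moreover obtain u v where "r = {u, v}"
      using \<open>r \<in> E\<close> opt_props(3) unfolding edges_in_def by blast
    ultimately show "A \<le> \<gamma> * edist r" using opt_edge_outside_H_weight(1) by (simp add: edist_eq)
  qed
  also have "\<dots> \<le> \<gamma> * sum edist (E - G)"
    unfolding sum_distrib_left[symmetric]
    using finE R_out edist_nonneg[OF opt_props(3)] gamma_ge_1
    by (intro mult_left_mono sum_mono2) auto
  also have "\<dots> < sum edist (G - E)"
  proof (rule stable_opt_gap[OF stable finite_V gamma_ge_1 _ _ _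
        attached_edges_in[of R m, folded G_def] con[folded G_def]])
    show "T \<subseteq> insert a S" "insert a S \<subseteq> V" "insert a S \<noteq> {}" using opt fan_props(1) by auto
    show "\<not> E \<subseteq> G" using R_out \<open>R \<noteq> {}\<close> by blast
  qed
  finally show False by simp
qed

lemma fan_in_opt: "\<forall>i<m. {a, b ! i} \<in> E"
  using leaf_edge_in_opt_if_center_in_S[OF center_in_S] by blast

end

theorem mainTheorem9:
  fixes V T :: "'a::metric_space set" and OPT :: "'a set \<times> 'a set set"
    and VH :: "'a set" and EH :: "'a set set" and a :: 'a and b :: "'a list" and \<gamma> :: real
  assumes "\<gamma> > 1.755"
    and "finite V" and "T \<subseteq> V"
    and "stable_with_opt \<gamma> V T OPT"
    and "\<forall>u v. {u, v} \<in> snd OPT \<longrightarrow> u \<in> T \<or> v \<in> T"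
    and "subgraph VH EH OPT"
    and "tc_fan V T VH EH a b"
    and "\<forall>u\<in>V. \<forall>v\<in>V. u \<in> VH \<union> T \<longrightarrow> v \<in> VH \<union> T \<longrightarrow>
           tcomp T VH EH u \<noteq> tcomp T VH EH v \<longrightarrow> {u, v} \<notin> EH \<longrightarrow>
           avg_weight a b < dist u v"
    and "\<forall>a' b'. tc_fan V T VH EH a' b' \<longrightarrow> avg_weight a b \<le> avg_weight a' b'"
    and "\<forall>i<length b. \<forall>j<length b. dist a (b ! i) \<le> (1 / (\<gamma> - 1)) * dist a (b ! j)"
  shows "\<forall>i<length b. {a, b ! i} \<in> snd OPT"
proof -
  interpret steiner_fan V T OPT VH EH a b \<gamma>
    using assms(1,2,4-10) by (rule steiner_fan.intro)
  show ?thesis by (rule fan_in_opt)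
qed

end
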